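(* Let $\mathbb{T}=[0,T]$ with $T\in(0,\infty)$, and suppose $F(\omega^0,\omega^1,m,t)=G(m[0,t])$ for some continuous $G:[0,1]\to\mathbb{R}$ which is differentiable on $(0,1)$. If $F$ satisfies condition (B.2), then $G$ is constant.
   Context: $(\Omega^{\mathrm{com}},\mathcal{F}^{\mathrm{com}},\mathbb{F}^{\mathrm{com}},\mathbb{P}^{\mathrm{com}})$ and $(\Omega^{\mathrm{ind}},\mathcal{F}^{\mathrm{ind}},\mathbb{F}^{\mathrm{ind}},\mathbb{P}^{\mathrm{ind}})$ are filtered probability spaces (filtrations indexed by $\mathbb{T}$); $\Omega^{\mathrm{com}}\times\Omega^{\mathrm{ind}}$ carries $\mathbb{P}^{\mathrm{com}}\times\mathbb{P}^{\mathrm{ind}}$, and $W^0,W^1$ are the coordinate projections. $\mathcal{P}(\mathbb{T})$ is the set of Borel probability measures on $\mathbb{T}$ and $m[0,t]:=m([0,t])$. An $\mathbb{F}^{\mathrm{com}}$-adapted random measure is a $\mathcal{P}(\mathbb{T})$-valued random variable $\mu$ with $\mu[0,t]$ $\mathcal{F}^{\mathrm{com}}_t$-measurable for each $t$ (deterministic measures are such). Condition (B.2): for every pair of $\mathbb{F}^{\mathrm{com}}$-adapted random measures $\mu,\tilde\mu$ with $\mu[0,t]\ge\tilde\mu[0,t]$ for all $t\in\mathbb{T}$ a.s., the process $M_t=F(W^0,W^1,\tilde\mu,t)-F(W^0,W^1,\mu,t)$ is a submartingale. *)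

theory Defs
  imports "HOL-Probability.Probability"
begin

definition borelT :: "real \<Rightarrow> real measure" where
  "borelT T = restrict_space borel {0..T}"

definition filtered_prob_space :: "'a measure \<Rightarrow> (real \<Rightarrow> 'a measure) \<Rightarrow> real \<Rightarrow> bool" where
  "filtered_prob_space M F T \<longleftrightarrow> prob_space M
     \<and> (\<forall>t\<in>{0..T}. subalgebra M (F t))
     \<and> (\<forall>s t. 0 \<le> s \<longrightarrow> s \<le> t \<longrightarrow> t \<le> T \<longrightarrow> sets (F s) \<subseteq> sets (F t))"

definition submartingale ::
    "'a measure \<Rightarrow> (real \<Rightarrow> 'a measure) \<Rightarrow> real \<Rightarrow> (real \<Rightarrow> 'a \<Rightarrow> real) \<Rightarrow> bool" where
  "submartingale M F T X \<longleftrightarrow>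
     (\<forall>t\<in>{0..T}. X t \<in> borel_measurable (F t) \<and> integrable M (X t))
     \<and> (\<forall>s t. 0 \<le> s \<longrightarrow> s \<le> t \<longrightarrow> t \<le> T \<longrightarrow>
          (AE \<omega> in M. X s \<omega> \<le> real_cond_exp M (F s) (X t) \<omega>))"

definition adapted_random_measure ::
    "'a measure \<Rightarrow> (real \<Rightarrow> 'a measure) \<Rightarrow> real \<Rightarrow> ('a \<Rightarrow> real measure) \<Rightarrow> bool" where
  "adapted_random_measure M F T \<mu> \<longleftrightarrow>
     \<mu> \<in> measurable M (subprob_algebra (borelT T))
     \<and> (\<forall>\<omega>\<in>space M. prob_space (\<mu> \<omega>) \<and> sets (\<mu> \<omega>) = sets (borelT T))
     \<and> (\<forall>t\<in>{0..T}. (\<lambda>\<omega>. measure (\<mu> \<omega>) {0..t}) \<in> borel_measurable (F t))"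

text \<open>Condition (B.2). The product space carries the product measure and the product
  filtration (Fc t \<Otimes> Fi t); W0 = fst, W1 = snd are the coordinate projections.\<close>
definition cond_B2 ::
    "'a measure \<Rightarrow> (real \<Rightarrow> 'a measure) \<Rightarrow> 'b measure \<Rightarrow> (real \<Rightarrow> 'b measure) \<Rightarrow> real
     \<Rightarrow> ('a \<Rightarrow> 'b \<Rightarrow> real measure \<Rightarrow> real \<Rightarrow> real) \<Rightarrow> bool" where
  "cond_B2 Mc Fc Mi Fi T F \<longleftrightarrow>
     (\<forall>\<mu> \<mu>'. adapted_random_measure Mc Fc T \<mu> \<longrightarrow> adapted_random_measure Mc Fc T \<mu>' \<longrightarrow>
        (AE \<omega> in Mc. \<forall>t\<in>{0..T}. measure (\<mu> \<omega>) {0..t} \<ge> measure (\<mu>' \<omega>) {0..t}) \<longrightarrow>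
        submartingale (Mc \<Otimes>\<^sub>M Mi) (\<lambda>t. Fc t \<Otimes>\<^sub>M Fi t) T
          (\<lambda>t \<omega>. F (fst \<omega>) (snd \<omega>) (\<mu>' (fst \<omega>)) t - F (fst \<omega>) (snd \<omega>) (\<mu> (fst \<omega>)) t))"

end

theory Submission
  imports Defs
begin

text \<open>Condition (B.2) applied to deterministic measures gives a deterministic submartingale,
  i.e. a nondecreasing function of time. Compare \<mu>' = \<delta>(T) with
  \<mu> = x \<delta>(a) + (1 - x) \<delta>(T) for some 0 < a < T. Then
  t \<mapsto> G(\<mu>'[0,t]) - G(\<mu>[0,t]) takes the values 0, G 0 - G x, 0 at t = 0, a, T,
  so G x = G 0.\<close>

lemma space_borelT: "space (borelT T) = {0..T}"
  unfolding borelT_def by (simp add: space_restrict_space)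

lemma sets_borelT_Icc:
  assumes "0 \<le> t" "t \<le> T"
  shows "{0..t} \<in> sets (borelT T)"
proof -
  have "{0..T} \<inter> {0..t} \<in> (\<inter>) {0..T} ` sets (borel :: real measure)"
    by (rule imageI) simp
  moreover have "{0..T} \<inter> {0..t} = {0..t}" using assms by auto
  ultimately show ?thesis unfolding borelT_def sets_restrict_space by metis
qed

lemma adapted_random_measure_const:
  assumes "prob_space m" "sets m = sets (borelT T)"
  shows "adapted_random_measure M F T (\<lambda>_. m)"
proof -
  have "m \<in> space (subprob_algebra (borelT T))"
    unfolding space_subprob_algebra using assms prob_space_imp_subprob_space by blast
  then show ?thesis
    unfolding adapted_random_measure_def using assms by (simp add: measurable_const)
qed

lemma subalgebra_pair_measure:
  assumes "subalgebra M F" "subalgebra N G"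
  shows "subalgebra (M \<Otimes>\<^sub>M N) (F \<Otimes>\<^sub>M G)"
  unfolding subalgebra_def
proof
  show "space (F \<Otimes>\<^sub>M G) = space (M \<Otimes>\<^sub>M N)"
    using assms by (simp add: space_pair_measure subalgebra_def)
  show "sets (F \<Otimes>\<^sub>M G) \<subseteq> sets (M \<Otimes>\<^sub>M N)"
  proof (rule sets_pair_in_sets)
    fix a b assume "a \<in> sets F" "b \<in> sets G"
    then have "a \<in> sets M" "b \<in> sets N" using assms unfolding subalgebra_def by blast+
    then show "a \<times> b \<in> sets (M \<Otimes>\<^sub>M N)" by (rule pair_measureI)
  qed
qed

lemma submartingale_const_mono:
  assumes "prob_space M" and subalg: "\<forall>t\<in>{0..T}. subalgebra M (F t)"
    and sub: "submartingale M F T (\<lambda>t _. x t)"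
    and "0 \<le> s" "s \<le> t" "t \<le> T"
  shows "x s \<le> x t"
proof -
  interpret prob_space M by fact
  interpret sigma_finite_subalgebra M "F s"
    using subalg \<open>0 \<le> s\<close> \<open>s \<le> t\<close> \<open>t \<le> T\<close>
    by (intro finite_measure_subalgebra_is_sigma_finite)
       (simp add: finite_measure_subalgebra_def finite_measure_subalgebra_axioms_def
          finite_measure_axioms)
  have "AE \<omega> in M. x s \<le> real_cond_exp M (F s) (\<lambda>_. x t) \<omega>"
    using sub assms(4-6) unfolding submartingale_def by blast
  moreover have "AE \<omega> in M. real_cond_exp M (F s) (\<lambda>_. x t) \<omega> = x t"
    by (rule real_cond_exp_F_meas) simp_all
  ultimately have "AE \<omega> in M. x s \<le> x t" by eventually_elim simp
  then show ?thesis by simp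
qed

lemma cond_B2_const_measures_mono:
  assumes fc: "filtered_prob_space Mc Fc T" and fi: "filtered_prob_space Mi Fi T"
    and FG: "\<And>w0 w1 m t. F w0 w1 m t = G (measure m {0..t})"
    and B2: "cond_B2 Mc Fc Mi Fi T F"
    and m: "prob_space m" "sets m = sets (borelT T)"
    and m': "prob_space m'" "sets m' = sets (borelT T)"
    and dom: "\<forall>t\<in>{0..T}. measure m' {0..t} \<le> measure m {0..t}"
    and st: "0 \<le> s" "s \<le> t" "t \<le> T"
  shows "G (measure m' {0..s}) - G (measure m {0..s}) \<le> G (measure m' {0..t}) - G (measure m {0..t})"
proof (rule submartingale_const_mono[OF _ _ _ st])
  show "prob_space (Mc \<Otimes>\<^sub>M Mi)"
    using fc fi by (intro prob_space_pair) (simp_all add: filtered_prob_space_def)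
  show "\<forall>t\<in>{0..T}. subalgebra (Mc \<Otimes>\<^sub>M Mi) (Fc t \<Otimes>\<^sub>M Fi t)"
    using fc fi by (simp add: filtered_prob_space_def subalgebra_pair_measure)
  have "AE \<omega> in Mc. \<forall>t\<in>{0..T}. measure m' {0..t} \<le> measure m {0..t}"
    using dom by simp
  from B2[unfolded cond_B2_def, rule_format, OF adapted_random_measure_const[OF m]
      adapted_random_measure_const[OF m'] this]
  show "submartingale (Mc \<Otimes>\<^sub>M Mi) (\<lambda>t. Fc t \<Otimes>\<^sub>M Fi t) T
      (\<lambda>t _. G (measure m' {0..t}) - G (measure m {0..t}))"
    unfolding FG .
qed

definition two_point_measure :: "real \<Rightarrow> real \<Rightarrow> real \<Rightarrow> real measure" where
  "two_point_measure T a p =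
     distr (measure_pmf (bernoulli_pmf p)) (borelT T) (\<lambda>c. if c then a else T)"

lemma two_point_measure_measurable:
  assumes "a \<in> {0..T}"
  shows "(\<lambda>c. if c then a else T) \<in> measurable (measure_pmf (bernoulli_pmf p)) (borelT T)"
  using assms by (auto simp: space_borelT)

lemma prob_space_two_point_measure:
  assumes "a \<in> {0..T}"
  shows "prob_space (two_point_measure T a p)"
  unfolding two_point_measure_def
  using prob_space_measure_pmf two_point_measure_measurable[OF assms]
  by (rule prob_space.prob_space_distr)

lemma sets_two_point_measure: "sets (two_point_measure T a p) = sets (borelT T)"
  unfolding two_point_measure_def by simp

lemma measure_two_point_measure_Icc:
  assumes "0 \<le> a" "a < T" "0 \<le> p" "p \<le> 1" "0 \<le> t" "t \<le> T"
  shows "measure (two_point_measure T a p) {0..t} = (if T \<le> t then 1 else if a \<le> t then p else 0)"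
proof -
  have "measure (two_point_measure T a p) {0..t}
      = measure_pmf.prob (bernoulli_pmf p) {c. (if c then a else T) \<le> t}"
    unfolding two_point_measure_def
    using measure_distr[OF two_point_measure_measurable sets_borelT_Icc] assms
    by (simp add: vimage_def)
  also have "{c. (if c then a else T) \<le> t} = (if T \<le> t then UNIV else if a \<le> t then {True} else {})"
    using assms by auto
  finally show ?thesis
    using assms by (simp add: measure_pmf_single measure_pmf.prob_space)
qed

theorem mainTheorem5:
  fixes Mc :: "'a measure" and Fc :: "real \<Rightarrow> 'a measure"
    and Mi :: "'b measure" and Fi :: "real \<Rightarrow> 'b measure"
    and T :: real and G :: "real \<Rightarrow> real"
    and F :: "'a \<Rightarrow> 'b \<Rightarrow> real measure \<Rightarrow> real \<Rightarrow> real"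
  assumes "T > 0"
    and "filtered_prob_space Mc Fc T"
    and "filtered_prob_space Mi Fi T"
    and "\<And>w0 w1 m t. F w0 w1 m t = G (measure m {0..t})"
    and "continuous_on {0..1} G"
    and "G differentiable_on {0<..<1}"
    and "cond_B2 Mc Fc Mi Fi T F"
  shows "\<exists>c. \<forall>x\<in>{0..1}. G x = c"
proof (intro exI ballI)
  fix x :: real assume x: "x \<in> {0..1}"
  let ?a = "T / 3"
  let ?m = "two_point_measure T ?a x" and ?m' = "two_point_measure T ?a 0"
  have a: "?a \<in> {0..T}" "0 \<le> ?a" "?a < T" using \<open>T > 0\<close> by auto
  note cdf = measure_two_point_measure_Icc[OF a(2,3)]
  have "\<forall>t\<in>{0..T}. measure ?m' {0..t} \<le> measure ?m {0..t}"
    using x by (simp add: cdf)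
  note mono = cond_B2_const_measures_mono[OF assms(2,3,4,7)
      prob_space_two_point_measure[OF a(1)] sets_two_point_measure
      prob_space_two_point_measure[OF a(1)] sets_two_point_measure this]
  have "G 0 - G 0 \<le> G 0 - G x" "G 0 - G x \<le> G 1 - G 1"
    using mono[of 0 ?a] mono[of ?a T] x a \<open>T > 0\<close>
    by (simp_all add: cdf del: atLeastAtMost_singleton)
  then show "G x = G 0" by linarith
qed

end
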